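(* For an integer $j\ge 2$ let $\bar\alpha_j$ be the largest $\alpha\ge 0$ such that $\left(1-e^{-\alpha j x}\right)^{j-1}\le x$ for all $x\in(0,1]$. Then $\bar\alpha_2=\tfrac12$, and for $j\ge 3$, $$\bar\alpha_j=\frac{1}{j}\,y_j^*\left(1-e^{-y_j^*}\right)^{1-j},$$ where $y_j^*$ is the unique positive solution of $e^{y}=(j-1)y+1$ (equivalently $y_j^*=-\frac{1}{j-1}\bigl(1+(j-1)W_{-1}\bigl(-\tfrac{1}{j-1}e^{-1/(j-1)}\bigr)\bigr)$ with $W_{-1}$ the non-principal real branch of the Lambert $W$ function). Numerically, $\bar\alpha_3\approx 0.8184$ and $\bar\alpha_4\approx 0.7722$. *)

theory Defs
  imports Complex_Main
begin

definition admissible :: "nat \<Rightarrow> real \<Rightarrow> bool" where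
  "admissible j a \<longleftrightarrow> a \<ge> 0 \<and>
     (\<forall>x::real. 0 < x \<and> x \<le> 1 \<longrightarrow> (1 - exp (- a * real j * x)) ^ (j - 1) \<le> x)"

definition alpha_bar :: "nat \<Rightarrow> real" where
  "alpha_bar j = (GREATEST a. admissible j a)"

end

theory Submission imports Defs begin

(* Write n = j - 1 and q(y) = (1 - e^(-y))^n / y for y > 0.  Substituting y = a*j*x, the
   admissibility of a says exactly that q(y) <= 1/(a*j) for all y in (0, a*j].  Hence, if q
   attains its maximum over (0,oo) at some point s, then alpha_bar j = s / (j * (1 - e^(-s))^n)
   (lemma alpha_bar_of_maximiser).  For n >= 2 the logarithmic derivative of q has the sign of
   n*y + 1 - e^y, so q increases up to the unique positive root s of e^s = n*s + 1 and
   decreases afterwards.  The file therefore first studies the gap e^y - k*y - 1 for a real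
   k > 1 (it is negative before its unique positive root and positive after it), then proves
   that q is maximal at that root, and derives the formula for alpha_bar j, j >= 3.  The case
   j = 2 is handled directly: q(y) = (1 - e^(-y))/y has supremum 1 without attaining it.
   Finally, at the root e^(-s) = 1/(n*s + 1), which turns alpha_bar 3 and alpha_bar 4 into
   rational functions of s; enclosing s with Taylor bounds for exp gives the numerical values. *)

lemma one_plus_less_exp:
  fixes x :: real assumes "x \<noteq> 0" shows "1 + x < exp x"
proof -
  obtain t where "exp x = (\<Sum>m<2. x ^ m / fact m) + exp t / fact 2 * x ^ 2"
    using Maclaurin_exp_lt[OF assms, of 2] by auto
  moreover have "0 < exp t / fact 2 * x ^ 2" using assms by simp
  ultimately show ?thesis by (simp add: numeral_2_eq_2)
qed

lemma exp_gap_neg: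
  fixes k y :: real assumes "0 < y" "exp y \<le> k"
  shows "exp y - k * y - 1 < 0"
proof -
  have "exp y * (1 - y) < exp y * exp (- y)"
    using one_plus_less_exp[of "- y"] assms(1) by simp
  then have "exp y - 1 < y * exp y" by (simp add: exp_minus field_simps)
  also have "\<dots> \<le> y * k" using assms by (intro mult_left_mono) auto
  finally show ?thesis by (simp add: algebra_simps)
qed

lemma exp_gap_strict_mono:
  fixes k a b :: real assumes "k \<le> exp a" "a < b"
  shows "exp a - k * a - 1 < exp b - k * b - 1"
proof -
  have "exp a * (1 + (b - a)) < exp a * exp (b - a)"
    using one_plus_less_exp[of "b - a"] assms(2) by simp
  then have "exp a + exp a * (b - a) < exp b" by (simp add: exp_diff field_simps)
  moreover have "k * (b - a) \<le> exp a * (b - a)"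
    using assms by (intro mult_right_mono) auto
  ultimately show ?thesis by (simp add: algebra_simps)
qed

(* For k > 1 the gap has a positive root: it is negative at ln k and positive at 4k. *)
lemma exp_gap_root_exists:
  fixes k :: real assumes "1 < k"
  shows "\<exists>s>0. exp s = k * s + 1"
proof -
  let ?h = "\<lambda>y. exp y - k * y - 1"
  have ln_pos: "0 < ln k" using assms by simp
  have ln_le: "ln k \<le> 4 * k" using ln_less_self[of k] assms by linarith
  have neg: "?h (ln k) < 0" by (rule exp_gap_neg) (use assms ln_pos in auto)
  have "(1 + 2 * k) ^ 2 \<le> exp (2 * k) ^ 2"
    by (rule power_mono) (use assms in auto)
  also have "\<dots> = exp (4 * k)" by (simp add: power2_eq_square exp_add[symmetric])
  finally have pos: "?h (4 * k) > 0" using assms by (simp add: power2_eq_square algebra_simps)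
  have "continuous_on {ln k..4 * k} ?h" by (intro continuous_intros)
  then obtain s where "ln k \<le> s" "?h s = 0"
    using IVT'[of ?h "ln k" 0 "4 * k"] neg pos ln_le by fastforce
  then show ?thesis using ln_pos by (intro exI[of _ s]) auto
qed

(* A positive root s lies beyond the minimum ln k of the gap, where it is increasing. *)
lemma exp_gap_root_past_minimum:
  fixes k s :: real assumes "s > 0" "exp s = k * s + 1"
  shows "k < exp s"
  using exp_gap_neg[of s k] assms by fastforce

lemma exp_gap_nonpos_below_root:
  fixes k s y :: real assumes s: "s > 0" "exp s = k * s + 1" and y: "0 < y" "y \<le> s"
  shows "exp y - k * y - 1 \<le> 0"
proof (cases "k < exp y")
  case True
  then show ?thesis
    using exp_gap_strict_mono[of k y s] s y by (cases "y = s") auto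
next
  case False
  then show ?thesis using exp_gap_neg[of y k] y by simp
qed

lemma exp_gap_nonneg_above_root:
  fixes k s y :: real assumes s: "s > 0" "exp s = k * s + 1" and y: "s \<le> y"
  shows "exp y - k * y - 1 \<ge> 0"
  using exp_gap_strict_mono[of k s y] exp_gap_root_past_minimum[OF s] s y by (cases "y = s") auto

lemma exp_gap_root_unique:
  fixes k s t :: real assumes s: "s > 0" "exp s = k * s + 1" and t: "t > 0" "exp t = k * t + 1"
  shows "s = t"
  using exp_gap_strict_mono[of k s t] exp_gap_strict_mono[of k t s]
    exp_gap_root_past_minimum[OF s] exp_gap_root_past_minimum[OF t] s t
  by (cases s t rule: linorder_cases) auto

lemma exp_gap_root_between:
  fixes k s a b :: real assumes s: "s > 0" "exp s = k * s + 1"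
    and a: "0 < a" "exp a < k * a + 1" and b: "0 < b" "k * b + 1 < exp b"
  shows "a < s" "s < b"
  using exp_gap_nonneg_above_root[OF s, of a] exp_gap_nonpos_below_root[OF s, of b] a b
  by (auto simp: not_less[symmetric])

(* The logarithm of q(y) = (1 - e^(-y))^k / y has a derivative of the same sign as the gap. *)
lemma log_ratio_deriv:
  fixes x k :: real assumes "x > 0"
  shows "((\<lambda>y. k * ln (1 - exp (- y)) - ln y) has_real_derivative
           (k * x + 1 - exp x) / (x * (exp x - 1))) (at x)"
proof -
  have "exp (- x) < 1" "1 < exp x" using assms by auto
  moreover have "((\<lambda>y. k * ln (1 - exp (- y)) - ln y) has_real_derivative
           k * (exp (- x) / (1 - exp (- x))) - 1 / x) (at x)"
    using assms calculation by (auto intro!: derivative_eq_intros)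
  ultimately show ?thesis using assms by (simp add: exp_minus field_simps)
qed

lemma ratio_maximal_at_root:
  fixes s y :: real and n :: nat
  assumes n: "n \<ge> 2" and s: "s > 0" "exp s = real n * s + 1" and y: "y > 0"
  shows "(1 - exp (- y)) ^ n / y \<le> (1 - exp (- s)) ^ n / s"
proof -
  define \<psi> where "\<psi> = (\<lambda>y. real n * ln (1 - exp (- y)) - ln y)"
  have deriv: "(\<psi> has_real_derivative (real n * x + 1 - exp x) / (x * (exp x - 1))) (at x)"
    if "x > 0" for x
    unfolding \<psi>_def using that by (rule log_ratio_deriv)
  have cont: "continuous_on {a..b} \<psi>" if "0 < a" for a b
    unfolding \<psi>_def using that by (intro continuous_intros) auto
  have "\<psi> y \<le> \<psi> s"
  proof (cases "y \<le> s")
    case True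
    show ?thesis
    proof (rule DERIV_nonneg_imp_increasing_open[OF True _ cont[OF y]])
      fix x assume x: "y < x" "x < s"
      then have "exp x - real n * x - 1 \<le> 0" "0 < x * (exp x - 1)"
        using exp_gap_nonpos_below_root[OF s, of x] y by auto
      then show "\<exists>d. (\<psi> has_real_derivative d) (at x) \<and> d \<ge> 0"
        using deriv[of x] x y by (intro exI conjI) auto
    qed
  next
    case False
    show ?thesis
    proof (rule DERIV_nonpos_imp_decreasing_open[of s y, OF _ _ cont[OF s(1)]])
      fix x assume x: "s < x" "x < y"
      then have "exp x - real n * x - 1 \<ge> 0" "0 < x * (exp x - 1)"
        using exp_gap_nonneg_above_root[OF s, of x] s by auto
      then show "\<exists>d. (\<psi> has_real_derivative d) (at x) \<and> d \<le> 0"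
        using deriv[of x] x s by (intro exI conjI) (auto intro!: divide_nonpos_pos)
    qed (use False in simp)
  qed
  moreover have "\<psi> z = ln ((1 - exp (- z)) ^ n / z)" if "z > 0" for z
    unfolding \<psi>_def using that by (simp add: ln_div ln_realpow)
  ultimately show ?thesis using y s by simp
qed

(* If q attains its maximum at s, then alpha_bar (n+1) = s / ((n+1) * (1 - e^(-s))^n):
   the substitution y = a*(n+1)*x turns admissibility into q(y) <= 1/(a*(n+1)) on (0, a*(n+1)],
   and s lies in that range once a exceeds the claimed value. *)
lemma alpha_bar_of_maximiser:
  fixes s :: real and n :: nat
  assumes s: "s > 0"
    and max: "\<And>y. y > 0 \<Longrightarrow> (1 - exp (- y)) ^ n / y \<le> (1 - exp (- s)) ^ n / s"
  shows "alpha_bar (n + 1) = 1 / real (n + 1) * s / (1 - exp (- s)) ^ n"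
proof -
  define m where "m = s / (1 - exp (- s)) ^ n"
  have pow_pos: "0 < (1 - exp (- s)) ^ n" using s by simp
  have pow_le: "(1 - exp (- s)) ^ n \<le> 1" using s by (simp add: power_le_one)
  have m_pos: "m > 0" using s pow_pos by (simp add: m_def)
  have s_le_m: "s \<le> m" unfolding m_def using s pow_pos pow_le by (simp add: field_simps)
  show ?thesis
    unfolding alpha_bar_def
  proof (rule Greatest_equality)
    show "admissible (n + 1) (1 / real (n + 1) * s / (1 - exp (- s)) ^ n)"
      unfolding admissible_def
    proof (intro conjI allI impI)
      fix x :: real assume x: "0 < x \<and> x \<le> 1"
      have y_pos: "m * x > 0" using x m_pos by simp
      have "(1 - exp (- (m * x))) ^ n / (m * x) \<le> 1 / m"
        using max[OF y_pos] by (simp add: m_def)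
      then have "(1 - exp (- (m * x))) ^ n \<le> x"
        using x m_pos by (simp add: field_simps)
      then show "(1 - exp (- (1 / real (n + 1) * s / (1 - exp (- s)) ^ n) * real (n + 1) * x))
                   ^ (n + 1 - 1) \<le> x"
        by (simp add: m_def del: of_nat_Suc)
    qed (use s pow_pos in simp)
  next
    fix a assume adm: "admissible (n + 1) a"
    show "a \<le> 1 / real (n + 1) * s / (1 - exp (- s)) ^ n"
    proof (rule ccontr)
      assume "\<not> ?thesis"
      then have "m / real (n + 1) < a" by (simp add: m_def mult.commute)
      then have big: "m < a * real (n + 1)" by (simp add: divide_less_eq del: of_nat_Suc)
      define x where "x = s / (a * real (n + 1))"
      have aj: "a * real (n + 1) > 0" using big m_pos by linarith
      have "0 < x" "x \<le> 1" using s s_le_m big aj by (auto simp: x_def field_simps)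
      then have "(1 - exp (- a * real (n + 1) * x)) ^ (n + 1 - 1) \<le> x"
        using adm unfolding admissible_def by blast
      moreover have "- a * real (n + 1) * x = - s" using aj by (simp add: x_def field_simps)
      ultimately have "(1 - exp (- s)) ^ n \<le> s / (a * real (n + 1))" by (simp add: x_def)
      then have "a * real (n + 1) \<le> m" using aj pow_pos by (simp add: m_def field_simps)
      then show False using big by simp
    qed
  qed
qed

lemma alpha_bar_at_root:
  fixes s :: real and n :: nat
  assumes "n \<ge> 2" "s > 0" "exp s = real n * s + 1"
  shows "alpha_bar (n + 1) = 1 / real (n + 1) * s / (1 - exp (- s)) ^ n"
  using assms by (intro alpha_bar_of_maximiser ratio_maximal_at_root)

(* At the root, 1 - e^(-s) is rational in s, which makes alpha_bar explicitly computable. *)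
lemma one_minus_exp_neg_at_root:
  fixes k s :: real assumes "s > 0" "k \<ge> 0" "exp s = k * s + 1"
  shows "1 - exp (- s) = k * s / (k * s + 1)"
proof -
  have "0 < k * s + 1" using assms by (simp add: add_nonneg_pos)
  then show ?thesis using assms by (simp add: exp_minus field_simps)
qed

(* j = 2: here q(y) = (1 - e^(-y))/y < 1 has supremum 1 as y -> 0, so alpha_bar 2 = 1/2.
   Admissibility of 1/2 is 1 - e^(-x) <= x; for a > 1/2 the point x = (2a - 1)/(4a) violates
   1 - e^(-2ax) <= x, using e^(-t) <= 1/(1 + t). *)
lemma alpha_bar_2: "alpha_bar 2 = 1 / 2"
  unfolding alpha_bar_def
proof (rule Greatest_equality)
  show "admissible 2 (1 / 2)"
    unfolding admissible_def
  proof (intro conjI allI impI)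
    fix x :: real
    show "(1 - exp (- (1 / 2) * real 2 * x)) ^ (2 - 1) \<le> x"
      using exp_ge_add_one_self[of "- x"] by simp
  qed simp
next
  fix a assume adm: "admissible 2 a"
  show "a \<le> 1 / 2"
  proof (rule ccontr)
    assume "\<not> a \<le> 1 / 2"
    then have a: "a > 1 / 2" by simp
    define x where "x = (2 * a - 1) / (4 * a)"
    define t where "t = (2 * a - 1) / 2"
    have t_pos: "t > 0" using a by (simp add: t_def)
    have "0 < x" "x \<le> 1" using a by (simp_all add: x_def field_simps)
    then have "(1 - exp (- a * real 2 * x)) ^ (2 - 1) \<le> x"
      using adm unfolding admissible_def by blast
    moreover have "- a * real 2 * x = - t" using a by (simp add: x_def t_def field_simps)
    ultimately have "1 - x \<le> exp (- t)" by simp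
    also have "\<dots> \<le> 1 / (1 + t)"
      using exp_ge_add_one_self[of t] t_pos by (simp add: exp_minus field_simps)
    finally have "(1 - x) * (1 + t) \<le> 1" using t_pos by (simp add: field_simps)
    moreover have "(1 - x) * (1 + t) = (2 * a + 1) ^ 2 / (8 * a)"
      using a by (simp add: x_def t_def field_simps power2_eq_square)
    ultimately have "(2 * a + 1) ^ 2 \<le> 8 * a" using a by (simp add: field_simps)
    moreover have "(2 * a - 1) ^ 2 > 0" using a by simp
    ultimately show False by (simp add: power2_eq_square algebra_simps)
  qed
qed

(* Taylor enclosure of exp on [0,oo): the partial sum S_n(x) is a lower bound, and the Lagrange
   remainder e^t x^n/n! <= e^x x^n/n! gives e^x (1 - x^n/n!) <= S_n(x). *)
lemma exp_Taylor_bounds: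
  fixes x :: real assumes "0 \<le> x"
  shows "(\<Sum>m<n. x ^ m / fact m) \<le> exp x"
    and "exp x * (1 - x ^ n / fact n) \<le> (\<Sum>m<n. x ^ m / fact m)"
proof -
  obtain t where t: "\<bar>t\<bar> \<le> x"
    and eq: "exp x = (\<Sum>m<n. x ^ m / fact m) + exp t / fact n * x ^ n"
    using Maclaurin_exp_le[of x n] assms by auto
  show "(\<Sum>m<n. x ^ m / fact m) \<le> exp x"
    using eq assms by (simp add: add_increasing2)
  have "exp t \<le> exp x" using t by simp
  then have "exp t * (x ^ n / fact n) \<le> exp x * (x ^ n / fact n)"
    using assms by (intro mult_right_mono) auto
  then show "exp x * (1 - x ^ n / fact n) \<le> (\<Sum>m<n. x ^ m / fact m)"
    using eq by (simp add: right_diff_distrib)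
qed

lemma exp_less_by_Taylor:
  fixes x c :: real
  assumes "0 \<le> x" "0 < c" "(\<Sum>m<n. x ^ m / fact m) < c * (1 - x ^ n / fact n)"
  shows "exp x < c"
proof -
  have "0 \<le> (\<Sum>m<n. x ^ m / fact m)" using assms(1) by (intro sum_nonneg) simp
  then have r: "0 < 1 - x ^ n / fact n"
    using assms(2,3) by (smt (verit) mult_nonneg_nonpos)
  have "exp x * (1 - x ^ n / fact n) < c * (1 - x ^ n / fact n)"
    using exp_Taylor_bounds(2)[OF assms(1), of n] assms(3) by linarith
  then show ?thesis using r by simp
qed

(* j = 3: the root of e^s = 2s + 1 lies in (1.2564, 1.2565) and alpha_bar 3 = (2s+1)^2/(12s). *)
lemma alpha_bar_3_bounds: "0.8184 \<le> alpha_bar 3 \<and> alpha_bar 3 < 0.8185"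
proof -
  obtain s :: real where s: "s > 0" "exp s = 2 * s + 1"
    using exp_gap_root_exists[of 2] by auto
  have "exp (1.2564::real) < 2 * 1.2564 + 1"
    by (rule exp_less_by_Taylor[where n = 10]) (simp_all add: eval_nat_numeral fact_Suc)
  moreover have "2 * 1.2565 + 1 < exp (1.2565::real)"
    using exp_Taylor_bounds(1)[of "1.2565" 9] by (simp add: eval_nat_numeral fact_Suc)
  ultimately have lo: "1.2564 < s" and hi: "s < 1.2565"
    using exp_gap_root_between[OF s, of "1.2564" "1.2565"] by simp_all
  have "alpha_bar (2 + 1) = 1 / real (2 + 1) * s / (1 - exp (- s)) ^ 2"
    using s by (intro alpha_bar_at_root) auto
  also have "\<dots> = (2 * s + 1) ^ 2 / (12 * s)"
    using s by (simp add: one_minus_exp_neg_at_root[OF s(1) _ s(2)] field_simps power2_eq_square)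
  finally have A: "alpha_bar 3 = (2 * s + 1) ^ 2 / (12 * s)" by simp
  have "0.8184 * (12 * s) \<le> (2 * s + 1) ^ 2"
    using mult_nonneg_nonneg[of "s - 1.2564" "s - 1.2564"] lo
    by (simp add: power2_eq_square algebra_simps)
  moreover have "(2 * s + 1) ^ 2 < 0.8185 * (12 * s)"
    using mult_pos_pos[of "s - 1.2564" "1.2565 - s"] lo hi
    by (simp add: power2_eq_square algebra_simps)
  ultimately show ?thesis unfolding A using s(1) by (simp add: le_divide_eq divide_less_eq)
qed

(* j = 4: the root of e^s = 3s + 1 lies in (1.9038, 1.9039) and alpha_bar 4 = (3s+1)^3/(108 s^2).
   Writing s = 1.9038 + t with 0 < t < 10^-4 makes both bounds polynomial inequalities in t. *)
lemma alpha_bar_4_bounds: "0.7722 \<le> alpha_bar 4 \<and> alpha_bar 4 < 0.7723"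
proof -
  obtain s :: real where s: "s > 0" "exp s = 3 * s + 1"
    using exp_gap_root_exists[of 3] by auto
  have "exp (1.9038::real) < 3 * 1.9038 + 1"
    by (rule exp_less_by_Taylor[where n = 12]) (simp_all add: eval_nat_numeral fact_Suc)
  moreover have "3 * 1.9039 + 1 < exp (1.9039::real)"
    using exp_Taylor_bounds(1)[of "1.9039" 10] by (simp add: eval_nat_numeral fact_Suc)
  ultimately have lo: "1.9038 < s" and hi: "s < 1.9039"
    using exp_gap_root_between[OF s, of "1.9038" "1.9039"] by simp_all
  have "alpha_bar (3 + 1) = 1 / real (3 + 1) * s / (1 - exp (- s)) ^ 3"
    using s by (intro alpha_bar_at_root) auto
  also have "\<dots> = (3 * s + 1) ^ 3 / (108 * s ^ 2)"
    using s by (simp add: one_minus_exp_neg_at_root[OF s(1) _ s(2)] field_simps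
        power2_eq_square power3_eq_cube)
  finally have A: "alpha_bar 4 = (3 * s + 1) ^ 3 / (108 * s ^ 2)" by simp
  define t where "t = s - 1.9038"
  have t: "0 < t" "t < 1 / 10000" and st: "s = 1.9038 + t" using lo hi by (auto simp: t_def)
  have tt: "0 \<le> t * t" "0 \<le> t * t * t" "t * t \<le> t / 10000" "t * t * t \<le> t * t / 10000"
    using t by (auto intro: mult_left_mono[of t "1/10000" "t * t", simplified])
  have "(3 * s + 1) ^ 3 - 0.7722 * (108 * s ^ 2) = 150250361 / 5000000000
      + 2196032697 / 25000000 * t + 489051 / 5000 * (t * t) + 27 * (t * t * t)"
    unfolding st by (simp add: power2_eq_square power3_eq_cube algebra_simps)
  moreover have "(3 * s + 1) ^ 3 - 0.7723 * (108 * s ^ 2) = - 1136754469 / 125000000000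
      + 439000929 / 5000000 * t + 488997 / 5000 * (t * t) + 27 * (t * t * t)"
    unfolding st by (simp add: power2_eq_square power3_eq_cube algebra_simps)
  ultimately have "0.7722 * (108 * s ^ 2) \<le> (3 * s + 1) ^ 3" "(3 * s + 1) ^ 3 < 0.7723 * (108 * s ^ 2)"
    using t tt by linarith+
  then show ?thesis unfolding A using s(1) by (simp add: le_divide_eq divide_less_eq)
qed

theorem proposition1:
  shows "alpha_bar 2 = 1/2
    \<and> (\<forall>j::nat. j \<ge> 3 \<longrightarrow>
          (\<exists>!y::real. y > 0 \<and> exp y = real (j - 1) * y + 1)
        \<and> (\<forall>y::real. y > 0 \<and> exp y = real (j - 1) * y + 1 \<longrightarrow>
             alpha_bar j = (1 / real j) * y / (1 - exp (- y)) ^ (j - 1)))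
    \<and> 0.8184 \<le> alpha_bar 3 \<and> alpha_bar 3 < 0.8185
    \<and> 0.7722 \<le> alpha_bar 4 \<and> alpha_bar 4 < 0.7723"
proof -
  have "(\<exists>!y::real. y > 0 \<and> exp y = real (j - 1) * y + 1)
      \<and> (\<forall>y::real. y > 0 \<and> exp y = real (j - 1) * y + 1 \<longrightarrow>
             alpha_bar j = (1 / real j) * y / (1 - exp (- y)) ^ (j - 1))" if j: "j \<ge> 3" for j
  proof (intro conjI allI impI)
    have k: "1 < real (j - 1)" using j by simp
    show "\<exists>!y::real. y > 0 \<and> exp y = real (j - 1) * y + 1"
      using exp_gap_root_exists[OF k] exp_gap_root_unique by blast
    fix y :: real assume y: "y > 0 \<and> exp y = real (j - 1) * y + 1"
    have "alpha_bar (j - 1 + 1) = 1 / real (j - 1 + 1) * y / (1 - exp (- y)) ^ (j - 1)"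
      using j y by (intro alpha_bar_at_root) auto
    then show "alpha_bar j = (1 / real j) * y / (1 - exp (- y)) ^ (j - 1)"
      using j by simp
  qed
  then show ?thesis using alpha_bar_2 alpha_bar_3_bounds alpha_bar_4_bounds by simp
qed

end
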